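(* For every integer $n\ge 4$, $px_{3,2}(K_n)=2$.
   Context: All graphs are finite, simple and undirected. An edge-coloring of a graph may assign the same color to adjacent edges. A tree $T$ in an edge-colored graph is a proper tree if no two adjacent edges of $T$ receive the same color. For $S\subseteq V(G)$ with $|S|\ge 2$, an $S$-tree is a tree in $G$ containing all vertices of $S$. $S$-trees $T_1,\dots,T_\ell$ are internally disjoint if $E(T_i)\cap E(T_j)=\emptyset$ and $V(T_i)\cap V(T_j)=S$ for all $i\ne j$. For a connected graph $G$ of order $n$ and integers $k,\ell$ with $2\le k\le n$ and $1\le \ell\le \kappa_k(G)$ (where $\kappa_k(G)$ is the minimum, over all $k$-subsets $S$ of $V(G)$, of the maximum number of internally disjoint $S$-trees), the $(k,\ell)$-proper index $px_{k,\ell}(G)$ is the minimum number of colors in an edge-coloring of $G$ such that for every $k$-subset $S$ of $V(G)$ there exist $\ell$ internally disjoint proper $S$-trees. *)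

theory Defs
  imports Main
begin

text \<open>A graph is given by a vertex set V and an edge set E of 2-element subsets of V.
An edge-colouring is a function col from edges to nat; it uses at most c colours
if every edge of G gets a colour < c.\<close>

definition tree_connected :: "'a set \<Rightarrow> 'a set set \<Rightarrow> bool" where
  "tree_connected VT ET \<longleftrightarrow>
     (\<forall>u\<in>VT. \<forall>v\<in>VT. (u, v) \<in> {(a, b). {a, b} \<in> ET}\<^sup>*)"

definition has_cycle :: "'a set set \<Rightarrow> bool" where
  "has_cycle ET \<longleftrightarrow>
     (\<exists>xs. length xs \<ge> 3 \<and> distinct xs \<and>
        (\<forall>i<length xs. {xs ! i, xs ! ((i + 1) mod length xs)} \<in> ET))"

definition is_tree_in :: "'a set \<Rightarrow> 'a set set \<Rightarrow> 'a set \<Rightarrow> 'a set set \<Rightarrow> bool" where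
  "is_tree_in V E VT ET \<longleftrightarrow>
     VT \<subseteq> V \<and> ET \<subseteq> E \<and> VT \<noteq> {} \<and> (\<forall>e\<in>ET. e \<subseteq> VT) \<and>
     tree_connected VT ET \<and> \<not> has_cycle ET"

definition proper_edges :: "('a set \<Rightarrow> nat) \<Rightarrow> 'a set set \<Rightarrow> bool" where
  "proper_edges col ET \<longleftrightarrow>
     (\<forall>e\<in>ET. \<forall>f\<in>ET. e \<noteq> f \<and> e \<inter> f \<noteq> {} \<longrightarrow> col e \<noteq> col f)"

definition has_disjoint_proper_S_trees ::
  "'a set \<Rightarrow> 'a set set \<Rightarrow> ('a set \<Rightarrow> nat) \<Rightarrow> 'a set \<Rightarrow> nat \<Rightarrow> bool" where
  "has_disjoint_proper_S_trees V E col S l \<longleftrightarrow>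
     (\<exists>T :: nat \<Rightarrow> 'a set \<times> 'a set set.
        (\<forall>i<l. is_tree_in V E (fst (T i)) (snd (T i)) \<and> S \<subseteq> fst (T i)
               \<and> proper_edges col (snd (T i))) \<and>
        (\<forall>i<l. \<forall>j<l. i \<noteq> j \<longrightarrow>
               snd (T i) \<inter> snd (T j) = {} \<and> fst (T i) \<inter> fst (T j) = S))"

definition proper_index :: "nat \<Rightarrow> nat \<Rightarrow> 'a set \<Rightarrow> 'a set set \<Rightarrow> nat" where
  "proper_index k l V E =
     (LEAST c. \<exists>col :: 'a set \<Rightarrow> nat. (\<forall>e\<in>E. col e < c) \<and>
        (\<forall>S. S \<subseteq> V \<and> card S = k \<longrightarrow> has_disjoint_proper_S_trees V E col S l))"

definition K_vertices :: "nat \<Rightarrow> nat set" where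
  "K_vertices n = {0..<n}"

definition K_edges :: "nat \<Rightarrow> nat set set" where
  "K_edges n = {e. e \<subseteq> {0..<n} \<and> card e = 2}"

end

theory Submission
  imports Defs
begin

text \<open>One colour is not enough: under a constant colouring a proper tree is a matching,
  hence cannot connect three vertices. Two colours suffice: colour the edges
  {i, i + 1} with 1 and all other edges with 0. For every triple a < b < c of
  vertices one then exhibits two paths through a, b, c, sharing no edge and no
  vertex outside the triple, whose edges alternate between consecutive and
  non-consecutive pairs; a path with alternating colours is a proper tree.\<close>

fun path_edges :: "'a list \<Rightarrow> 'a set set" where
  "path_edges (x # y # zs) = insert {x, y} (path_edges (y # zs))"
| "path_edges _ = {}"

fun alternating :: "('a set \<Rightarrow> nat) \<Rightarrow> 'a list \<Rightarrow> bool" where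
  "alternating col (x # y # z # zs) = (col {x, y} \<noteq> col {y, z} \<and> alternating col (y # z # zs))"
| "alternating col _ = True"

lemma path_edges_subset: "e \<in> path_edges xs \<Longrightarrow> e \<subseteq> set xs"
  by (induction xs rule: path_edges.induct) auto

lemma path_edges_at_head:
  assumes "distinct (x # y # zs)" "e \<in> path_edges (x # y # zs)" "x \<in> e"
  shows "e = {x, y}"
proof (rule ccontr)
  assume "e \<noteq> {x, y}"
  then have "e \<in> path_edges (y # zs)" using assms(2) by simp
  then have "e \<subseteq> set (y # zs)" by (rule path_edges_subset)
  then have "x \<in> set (y # zs)" using assms(3) by blast
  then show False using assms(1) by simp
qed

lemma path_edges_rtrancl_hd:
  "v \<in> set xs \<Longrightarrow> (hd xs, v) \<in> {(a, b). {a, b} \<in> path_edges xs}\<^sup>*"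
proof (induction xs rule: path_edges.induct)
  case (1 x y zs)
  have "{(a, b). {a, b} \<in> path_edges (y # zs)}\<^sup>* \<subseteq> {(a, b). {a, b} \<in> path_edges (x # y # zs)}\<^sup>*"
    by (rule rtrancl_mono) auto
  then show ?case
    using 1 by (cases "v = x") (auto intro: converse_rtrancl_into_rtrancl)
qed auto

lemma tree_connected_path: "tree_connected (set xs) (path_edges xs)"
  unfolding tree_connected_def
proof (intro ballI)
  fix u v assume "u \<in> set xs" "v \<in> set xs"
  let ?R = "{(a, b). {a, b} \<in> path_edges xs}"
  have "sym (?R\<^sup>*)"
    by (rule sym_rtrancl) (auto simp: sym_def insert_commute)
  then have "(u, hd xs) \<in> ?R\<^sup>*"
    using path_edges_rtrancl_hd[OF \<open>u \<in> set xs\<close>] by (rule symD)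
  then show "(u, v) \<in> ?R\<^sup>*"
    using path_edges_rtrancl_hd[OF \<open>v \<in> set xs\<close>] by (rule rtrancl_trans)
qed

lemma proper_edges_insertI:
  assumes "proper_edges col F" "\<And>f. f \<in> F \<Longrightarrow> f \<noteq> e \<Longrightarrow> f \<inter> e \<noteq> {} \<Longrightarrow> col f \<noteq> col e"
  shows "proper_edges col (insert e F)"
  unfolding proper_edges_def
proof (intro ballI impI)
  fix g h assume g: "g \<in> insert e F" and h: "h \<in> insert e F" and gh: "g \<noteq> h \<and> g \<inter> h \<noteq> {}"
  consider "g = e" "h \<in> F" | "h = e" "g \<in> F" | "g \<in> F" "h \<in> F"
    using g h gh by blast
  then show "col g \<noteq> col h"
  proof cases
    case 1 then show ?thesis using assms(2)[of h] gh by (metis inf_commute)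
  next
    case 2 then show ?thesis using assms(2)[of g] gh by metis
  next
    case 3 then show ?thesis using assms(1) gh unfolding proper_edges_def by blast
  qed
qed

lemma proper_edges_path:
  "distinct xs \<Longrightarrow> alternating col xs \<Longrightarrow> proper_edges col (path_edges xs)"
proof (induction xs rule: path_edges.induct)
  case (1 x y zs)
  have tail: "proper_edges col (path_edges (y # zs))"
    using 1 by (cases zs) simp_all
  have head: "col f \<noteq> col {x, y}"
    if f: "f \<in> path_edges (y # zs)" "f \<noteq> {x, y}" "f \<inter> {x, y} \<noteq> {}" for f
  proof -
    obtain z zs' where zs: "zs = z # zs'"
      using f(1) by (cases zs) auto
    have "x \<notin> f" using path_edges_subset[OF f(1)] "1.prems"(1) by auto
    then have "y \<in> f" using f(3) by auto
    moreover have "distinct (y # z # zs')" using "1.prems"(1) zs by simp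
    moreover have "f \<in> path_edges (y # z # zs')" using f(1) zs by simp
    ultimately have "f = {y, z}" using path_edges_at_head by metis
    then show ?thesis using "1.prems"(2) zs by simp
  qed
  show ?case
    unfolding path_edges.simps(1) by (rule proper_edges_insertI[OF tail head])
qed (simp_all add: proper_edges_def)

lemma has_cycle_without_leaf:
  assumes "has_cycle ET" and leaf: "\<And>e. e \<in> ET \<Longrightarrow> x \<in> e \<Longrightarrow> e = {x, y}"
  shows "has_cycle {e \<in> ET. x \<notin> e}"
proof -
  obtain cs where len: "length cs \<ge> 3" and dist: "distinct cs"
    and edge: "\<forall>i<length cs. {cs ! i, cs ! ((i + 1) mod length cs)} \<in> ET"
    using assms(1) unfolding has_cycle_def by blast
  have "x \<notin> set cs"
  proof
    assume "x \<in> set cs"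
    then obtain i where i: "i < length cs" "cs ! i = x" by (meson in_set_conv_nth)
    \<comment> \<open>The predecessor j and successor k of x on the cycle are
        distinct vertices, but both must be y.\<close>
    define j where "j = (if i = 0 then length cs - 1 else i - 1)"
    define k where "k = (i + 1) mod length cs"
    have j: "j < length cs" "(j + 1) mod length cs = i" and k: "k < length cs"
      using i len by (auto simp: j_def k_def intro: mod_less_divisor)
    have "j \<noteq> k" "j \<noteq> i" "k \<noteq> i"
      using i len by (auto simp: j_def k_def mod_if)
    then have ne: "cs ! j \<noteq> cs ! k" "cs ! j \<noteq> x" "cs ! k \<noteq> x"
      using dist i j k by (metis nth_eq_iff_index_eq)+
    have "{cs ! j, x} = {x, y}" "{x, cs ! k} = {x, y}"
      using edge leaf i j k unfolding k_def by (metis insertCI)+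
    then show False using ne by (auto simp: doubleton_eq_iff)
  qed
  moreover have "(i + 1) mod length cs < length cs" for i
    using len by (intro mod_less_divisor) linarith
  ultimately have "\<forall>i<length cs. x \<notin> {cs ! i, cs ! ((i + 1) mod length cs)}"
    by (auto simp del: mod_less_divisor)
  then show ?thesis
    unfolding has_cycle_def using len dist edge by (intro exI[of _ cs]) auto
qed

lemma acyclic_path: "distinct xs \<Longrightarrow> \<not> has_cycle (path_edges xs)"
proof (induction xs rule: path_edges.induct)
  case (1 x y zs)
  have "x \<notin> e" if "e \<in> path_edges (y # zs)" for e
    using path_edges_subset[OF that] "1.prems" by auto
  then have "{e \<in> path_edges (x # y # zs). x \<notin> e} = path_edges (y # zs)"
    by auto
  moreover have "\<not> has_cycle (path_edges (y # zs))"
    using 1 by simp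
  ultimately show ?case
    using has_cycle_without_leaf path_edges_at_head[OF "1.prems"] by metis
qed (auto simp: has_cycle_def intro: exI[of _ 0])

lemma is_tree_in_path:
  assumes "distinct xs" "xs \<noteq> []" "set xs \<subseteq> V" "path_edges xs \<subseteq> E"
  shows "is_tree_in V E (set xs) (path_edges xs)"
  using assms path_edges_subset tree_connected_path acyclic_path
  unfolding is_tree_in_def by blast

lemma has_disjoint_proper_S_trees_two:
  assumes "is_tree_in V E VT1 ET1" "S \<subseteq> VT1" "proper_edges col ET1"
    and "is_tree_in V E VT2 ET2" "S \<subseteq> VT2" "proper_edges col ET2"
    and "VT1 \<inter> VT2 = S" "ET1 \<inter> ET2 = {}"
  shows "has_disjoint_proper_S_trees V E col S 2"
  unfolding has_disjoint_proper_S_trees_def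
  using assms
  by (intro exI[of _ "\<lambda>i. if i = 0 then (VT1, ET1) else (VT2, ET2)"])
    (auto simp: less_2_cases_iff Int_commute)

lemma has_disjoint_proper_S_trees_two_paths:
  assumes "distinct xs" "xs \<noteq> []" "set xs \<subseteq> V" "path_edges xs \<subseteq> E" "alternating col xs"
    and "distinct ys" "ys \<noteq> []" "set ys \<subseteq> V" "path_edges ys \<subseteq> E" "alternating col ys"
    and "S \<subseteq> set xs" "S \<subseteq> set ys" "set xs \<inter> set ys = S" "path_edges xs \<inter> path_edges ys = {}"
  shows "has_disjoint_proper_S_trees V E col S 2"
  using assms
  by (intro has_disjoint_proper_S_trees_two) (simp_all add: is_tree_in_path proper_edges_path)

definition successor_colouring :: "nat set \<Rightarrow> nat" where
  "successor_colouring e = (if \<exists>i. e = {i, Suc i} then 1 else 0)"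

lemma successor_colouring_doubleton:
  "successor_colouring {p, q} = (if p = Suc q \<or> q = Suc p then 1 else 0)"
  unfolding successor_colouring_def by (auto simp: doubleton_eq_iff)

lemma doubleton_in_K_edges: "{p, q} \<in> K_edges n \<longleftrightarrow> p \<noteq> q \<and> p < n \<and> q < n"
  unfolding K_edges_def by (auto simp: card_insert_if)

lemma successor_colouring_sorted_triple:
  assumes "n \<ge> 4" "a < b" "b < c" "c < n"
  shows "has_disjoint_proper_S_trees (K_vertices n) (K_edges n) successor_colouring {a, b, c} 2"
proof -
  note simps = doubleton_in_K_edges K_vertices_def successor_colouring_doubleton
    doubleton_eq_iff insert_commute
  consider "b \<noteq> Suc a" "c \<noteq> Suc b" | "b = Suc a" "c \<noteq> Suc b" | "b \<noteq> Suc a" "c = Suc b"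
    | "b = Suc a" "c = Suc b" "a \<ge> 1" | "a = 0" "b = 1" "c = 2"
    by linarith
  \<comment> \<open>Only the triple {0, 1, 2} forces a vertex beyond c, namely 3; hence n \<ge> 4.\<close>
  then show ?thesis
  proof cases
    case 1
    then show ?thesis using assms
      by (intro has_disjoint_proper_S_trees_two_paths[of "[b, a, Suc a, c]" _ _ _ "[b, c, c - 1, a]"])
        (auto simp: simps)
  next
    case 2
    then show ?thesis using assms
      by (intro has_disjoint_proper_S_trees_two_paths[of "[b, a, c]" _ _ _ "[b, c, c - 1, a]"])
        (auto simp: simps)
  next
    case 3
    then show ?thesis using assms
      by (intro has_disjoint_proper_S_trees_two_paths[of "[a, c, b]" _ _ _ "[b, a, Suc a, c]"])
        (auto simp: simps)
  next
    case 4
    then show ?thesis using assms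
      by (intro has_disjoint_proper_S_trees_two_paths[of "[b, a, c]" _ _ _ "[b, c, a - 1, a]"])
        (auto simp: simps)
  next
    case 5
    then show ?thesis using assms
      by (intro has_disjoint_proper_S_trees_two_paths[of "[a, c, b]" _ _ _ "[c, 3, a, b]"])
        (auto simp: simps)
  qed
qed

lemma card_3_sorted:
  fixes S :: "'a :: linorder set"
  assumes "card S = 3"
  obtains a b c where "a < b" "b < c" "S = {a, b, c}"
proof -
  obtain x y z where S: "S = {x, y, z}" "x \<noteq> y" "y \<noteq> z" "x \<noteq> z"
    using assms by (auto simp: card_3_iff)
  then show ?thesis
    using that by (cases x y rule: linorder_cases; cases y z rule: linorder_cases;
        cases x z rule: linorder_cases) (auto simp: insert_commute)
qed

lemma successor_colouring_K_n:
  assumes "n \<ge> 4" "S \<subseteq> K_vertices n" "card S = 3"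
  shows "has_disjoint_proper_S_trees (K_vertices n) (K_edges n) successor_colouring S 2"
proof -
  obtain a b c where "a < b" "b < c" "S = {a, b, c}"
    using card_3_sorted assms(3) by blast
  moreover have "c < n" using assms(2) calculation by (auto simp: K_vertices_def)
  ultimately show ?thesis
    using successor_colouring_sorted_triple assms(1) by blast
qed

lemma matching_rtrancl:
  assumes matching: "\<forall>e\<in>ET. \<forall>f\<in>ET. e \<inter> f \<noteq> {} \<longrightarrow> e = f"
    and "(u, v) \<in> {(a, b). {a, b} \<in> ET}\<^sup>*"
  shows "u = v \<or> {u, v} \<in> ET"
  using assms(2)
proof (induction rule: rtrancl_induct)
  case (step y z)
  then have yz: "{y, z} \<in> ET" by simp
  show ?case
  proof (cases "u = y")
    case False
    then have "{u, y} \<in> ET" using step.IH by simp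
    moreover have "{u, y} \<inter> {y, z} \<noteq> {}" by simp
    ultimately have "{u, y} = {y, z}" using yz matching by simp
    then show ?thesis using False by (auto simp: doubleton_eq_iff)
  qed (use yz in simp)
qed simp

lemma proper_monochromatic_connected:
  assumes "tree_connected VT ET" "\<forall>e\<in>ET. col e = k" "proper_edges col ET"
    and "{a, b, c} \<subseteq> VT"
  shows "a = b \<or> b = c \<or> a = c"
proof (rule ccontr)
  assume distinct: "\<not> (a = b \<or> b = c \<or> a = c)"
  have matching: "\<forall>e\<in>ET. \<forall>f\<in>ET. e \<inter> f \<noteq> {} \<longrightarrow> e = f"
  proof (intro ballI impI)
    fix e f assume "e \<in> ET" "f \<in> ET" "e \<inter> f \<noteq> {}"
    moreover have "col e = col f" using assms(2) \<open>e \<in> ET\<close> \<open>f \<in> ET\<close> by simp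
    ultimately show "e = f" using assms(3) unfolding proper_edges_def by blast
  qed
  have "(a, b) \<in> {(x, y). {x, y} \<in> ET}\<^sup>*" "(b, c) \<in> {(x, y). {x, y} \<in> ET}\<^sup>*"
    using assms(1,4) unfolding tree_connected_def by auto
  then have "{a, b} \<in> ET" "{b, c} \<in> ET"
    using matching_rtrancl[OF matching] distinct by auto
  moreover have "{a, b} \<inter> {b, c} \<noteq> {}" by simp
  ultimately have "{a, b} = {b, c}" using matching by simp
  then show False using distinct by (auto simp: doubleton_eq_iff)
qed

lemma no_disjoint_proper_S_trees_monochromatic:
  assumes "\<forall>e\<in>E. col e = k" "{a, b, c} \<subseteq> S" "a \<noteq> b" "b \<noteq> c" "a \<noteq> c" "l > 0"
  shows "\<not> has_disjoint_proper_S_trees V E col S l"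
proof
  assume "has_disjoint_proper_S_trees V E col S l"
  then obtain VT ET where "is_tree_in V E VT ET" "S \<subseteq> VT" "proper_edges col ET"
    using assms(6) unfolding has_disjoint_proper_S_trees_def by blast
  then show False
    using proper_monochromatic_connected[of VT ET col k a b c] assms(1-5)
    unfolding is_tree_in_def by blast
qed

theorem theorem2p4:
  fixes n :: nat
  assumes "n \<ge> 4"
  shows "proper_index 3 2 (K_vertices n) (K_edges n) = 2"
  unfolding proper_index_def
proof (rule Least_equality)
  show "\<exists>col. (\<forall>e\<in>K_edges n. col e < 2) \<and>
          (\<forall>S. S \<subseteq> K_vertices n \<and> card S = 3 \<longrightarrow>
               has_disjoint_proper_S_trees (K_vertices n) (K_edges n) col S 2)"
    using successor_colouring_K_n assms
    by (intro exI[of _ successor_colouring]) (auto simp: successor_colouring_def)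
next
  fix c
  assume "\<exists>col. (\<forall>e\<in>K_edges n. col e < c) \<and>
          (\<forall>S. S \<subseteq> K_vertices n \<and> card S = 3 \<longrightarrow>
               has_disjoint_proper_S_trees (K_vertices n) (K_edges n) col S 2)"
  then obtain col where col: "\<forall>e\<in>K_edges n. col e < c"
    and trees: "has_disjoint_proper_S_trees (K_vertices n) (K_edges n) col {0, 1, 2} 2"
    using assms by (auto simp: K_vertices_def)
  show "2 \<le> c"
  proof (rule ccontr)
    assume "\<not> 2 \<le> c"
    then have "\<forall>e\<in>K_edges n. col e = 0" using col by fastforce
    then show False
      using trees no_disjoint_proper_S_trees_monochromatic[of "K_edges n" col 0 0 1 2] by simp
  qed
qed

end
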